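(* $\mathbf{REG}\subset\mathbf{GRLOWJ}$, i.e., every regular language is accepted by some GRLOWJFA, and the inclusion is proper.
   Context: $\mathbf{REG}$ is the class of regular languages. "Subword" means a contiguous factor. A GRLOWJFA is a tuple $\mathcal{A}=(\Sigma,Q,q_0,F,R)$ with $\Sigma$ a finite alphabet, $Q$ a finite state set, $q_0\in Q$, $F\subseteq Q$, and $R\subset Q\times\Sigma^+\times Q$ a finite set of rules such that for each $p\in Q$, $w\in\Sigma^+$ at most one $q$ has $(p,w,q)\in R$ (meaning: go from $p$ to $q$ deleting $w$). $\Sigma_p=\{w:(p,w,q)\in R\text{ for some }q\}$. Configurations lie in $\Sigma^*Q\Sigma^*$. Moves $\curvearrowright$: (1) for $t,u,v\in\Sigma^*$ and $(p,x,q)\in R$: $tpuxv\curvearrowright tuqv$ provided $u$ contains no word of $\Sigma_p$ as a subword and there are no $u_1,x_2\in\Sigma^*$, $u_2,x_1\in\Sigma^+$ with $u=u_1u_2$, $x=x_1x_2$, $u_2x_1=x$; (2) for $x\in\Sigma^+$, $y\in\Sigma^*$ with $y$ containing no word of $\Sigma_p$ as a subword: $xpy\curvearrowright pxy$. $L_{GRL}(\mathcal{A})=\{w\in\Sigma^*: q_0w\curvearrowright^* q_f \text{ for some } q_f\in F\}$. $\mathbf{GRLOWJ}$ is the class of languages so accepted. *)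

theory Defs
  imports Main "HOL-Library.Sublist"
begin

(* Regular languages over a (finite) alphabet S, via DFAs with a finite state set
   (states taken from nat, i.e. up to renaming). *)
definition dfa_lang :: "'a set \<Rightarrow> 'q \<Rightarrow> 'q set \<Rightarrow> ('q \<Rightarrow> 'a \<Rightarrow> 'q) \<Rightarrow> 'a list set" where
  "dfa_lang S q0 F \<delta> = {w \<in> lists S. foldl \<delta> q0 w \<in> F}"

definition REG :: "'a set \<Rightarrow> 'a list set set" where
  "REG S = {L. \<exists>(Q::nat set) q0 F \<delta>. finite Q \<and> q0 \<in> Q \<and> F \<subseteq> Q \<and>
      (\<forall>q\<in>Q. \<forall>a\<in>S. \<delta> q a \<in> Q) \<and> L = dfa_lang S q0 F \<delta>}"

definition is_grlowjfa :: "'a set \<Rightarrow> 'q set \<Rightarrow> 'q \<Rightarrow> 'q set \<Rightarrow> ('q \<times> 'a list \<times> 'q) set \<Rightarrow> bool" where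
  "is_grlowjfa S Q q0 F R \<longleftrightarrow> finite S \<and> finite Q \<and> q0 \<in> Q \<and> F \<subseteq> Q \<and> finite R \<and>
     R \<subseteq> Q \<times> {w. w \<in> lists S \<and> w \<noteq> []} \<times> Q \<and>
     (\<forall>p w q q'. (p, w, q) \<in> R \<longrightarrow> (p, w, q') \<in> R \<longrightarrow> q = q')"

definition Sigma_p :: "('q \<times> 'a list \<times> 'q) set \<Rightarrow> 'q \<Rightarrow> 'a list set" where
  "Sigma_p R p = {w. \<exists>q. (p, w, q) \<in> R}"

definition no_sub :: "('q \<times> 'a list \<times> 'q) set \<Rightarrow> 'q \<Rightarrow> 'a list \<Rightarrow> bool" where
  "no_sub R p u \<longleftrightarrow> (\<forall>w \<in> Sigma_p R p. \<not> sublist w u)"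

definition overlap :: "'a list \<Rightarrow> 'a list \<Rightarrow> bool" where
  "overlap u x \<longleftrightarrow> (\<exists>u1 u2 x1 x2. u = u1 @ u2 \<and> x = x1 @ x2 \<and> u2 \<noteq> [] \<and> x1 \<noteq> [] \<and> u2 @ x1 = x)"

(* Configurations t p v (t,v words, p a state) are represented as triples (t, p, v). *)
definition grl_move :: "('q \<times> 'a list \<times> 'q) set \<Rightarrow> ('a list \<times> 'q \<times> 'a list) \<Rightarrow> ('a list \<times> 'q \<times> 'a list) \<Rightarrow> bool" where
  "grl_move R c c' \<longleftrightarrow>
     (\<exists>t p u x v q. c = (t, p, u @ x @ v) \<and> c' = (t @ u, q, v) \<and> (p, x, q) \<in> R \<and>
        no_sub R p u \<and> \<not> overlap u x)
   \<or> (\<exists>x p y. c = (x, p, y) \<and> c' = ([], p, x @ y) \<and> x \<noteq> [] \<and> no_sub R p y)"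

definition grl_lang :: "'a set \<Rightarrow> 'q \<Rightarrow> 'q set \<Rightarrow> ('q \<times> 'a list \<times> 'q) set \<Rightarrow> 'a list set" where
  "grl_lang S q0 F R = {w \<in> lists S. \<exists>qf \<in> F. (grl_move R)\<^sup>*\<^sup>* ([], q0, w) ([], qf, [])}"

definition GRLOWJ :: "'a set \<Rightarrow> 'a list set set" where
  "GRLOWJ S = {L. \<exists>(Q::nat set) q0 F R. is_grlowjfa S Q q0 F R \<and> L = grl_lang S q0 F R}"

end

theory Submission
  imports Defs
begin

(* A DFA is simulated by the rules (p, [a], \<delta> p a): since every letter of the alphabet is
   deletable in every state, the automaton can neither skip a letter nor jump, so it reads
   its input from left to right exactly like the DFA.

   For properness, the rules (0, [0], 1) and (1, [1], 0) with start and final state 0 accept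
   exactly the words over {0, 1} with as many 0s as 1s: every deletion preserves the quantity
   #0 - #1 + state, and conversely a balanced word can always be consumed by deleting the
   leftmost deletable letter, jumping back to the front when none is left to the right.
   This language is not regular by the usual pigeonhole argument on the words 0^i. *)

lemma sublist_singleton_iff: "sublist [a] u \<longleftrightarrow> a \<in> set u"
  by (auto simp: sublist_def in_set_conv_decomp)

lemma not_overlap_singleton: "\<not> overlap u [a]"
  unfolding overlap_def by (auto simp: Cons_eq_append_conv append_eq_Cons_conv)

lemma no_sub_iff_disjoint:
  assumes "Sigma_p R p = (\<lambda>a. [a]) ` A"
  shows "no_sub R p u \<longleftrightarrow> set u \<inter> A = {}"
  using assms by (auto simp: no_sub_def sublist_singleton_iff)

lemma grl_move_delete:
  assumes "(p, x, q) \<in> R" "no_sub R p u" "\<not> overlap u x"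
  shows "grl_move R (t, p, u @ x @ v) (t @ u, q, v)"
  using assms unfolding grl_move_def by blast

lemma grl_move_delete_singleton:
  assumes "(p, [a], q) \<in> R" "no_sub R p u"
  shows "grl_move R (t, p, u @ a # v) (t @ u, q, v)"
  using grl_move_delete[OF assms not_overlap_singleton] by simp

lemma grl_move_jump:
  assumes "x \<noteq> []" "no_sub R p y"
  shows "grl_move R (x, p, y) ([], p, x @ y)"
  using assms unfolding grl_move_def by blast

lemma grl_moveE:
  assumes "grl_move R (t, p, w) (t', q, w')"
  obtains (delete) u x where "w = u @ x @ w'" "t' = t @ u" "(p, x, q) \<in> R" "no_sub R p u"
  | (jump) "t \<noteq> []" "t' = []" "q = p" "w' = t @ w" "no_sub R p w"
  using assms unfolding grl_move_def by blast

section \<open>Regular languages are GRLOWJ languages\<close>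

definition dfa_rules :: "'a set \<Rightarrow> 'q set \<Rightarrow> ('q \<Rightarrow> 'a \<Rightarrow> 'q) \<Rightarrow> ('q \<times> 'a list \<times> 'q) set" where
  "dfa_rules S Q \<delta> = (\<lambda>(p, a). (p, [a], \<delta> p a)) ` (Q \<times> S)"

lemma Sigma_p_dfa_rules: "p \<in> Q \<Longrightarrow> Sigma_p (dfa_rules S Q \<delta>) p = (\<lambda>a. [a]) ` S"
  unfolding Sigma_p_def dfa_rules_def by auto

lemma no_sub_dfa_rules_iff:
  assumes "p \<in> Q" "u \<in> lists S"
  shows "no_sub (dfa_rules S Q \<delta>) p u \<longleftrightarrow> u = []"
proof -
  have "no_sub (dfa_rules S Q \<delta>) p u \<longleftrightarrow> set u \<inter> S = {}"
    by (rule no_sub_iff_disjoint) (rule Sigma_p_dfa_rules[OF assms(1)])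
  with assms(2) show ?thesis by (cases u) auto
qed

lemma grl_move_dfa_rules_iff:
  assumes "p \<in> Q" "w \<in> lists S"
  shows "grl_move (dfa_rules S Q \<delta>) ([], p, w) (t, q, w') \<longleftrightarrow>
    (\<exists>a. w = a # w' \<and> t = [] \<and> q = \<delta> p a)"
proof
  assume "grl_move (dfa_rules S Q \<delta>) ([], p, w) (t, q, w')"
  then show "\<exists>a. w = a # w' \<and> t = [] \<and> q = \<delta> p a"
  proof (cases rule: grl_moveE)
    case (delete u x)
    with assms have "u = []"
      using no_sub_dfa_rules_iff[of p Q u S \<delta>] by auto
    with delete show ?thesis
      by (auto simp: dfa_rules_def)
  qed simp
next
  assume "\<exists>a. w = a # w' \<and> t = [] \<and> q = \<delta> p a"
  then obtain a where a: "w = a # w'" "t = []" "q = \<delta> p a" by blast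
  have "(p, [a], \<delta> p a) \<in> dfa_rules S Q \<delta>"
    using assms a(1) by (force simp: dfa_rules_def)
  moreover have "no_sub (dfa_rules S Q \<delta>) p []"
    using no_sub_dfa_rules_iff[OF assms(1) lists.Nil] by simp
  ultimately show "grl_move (dfa_rules S Q \<delta>) ([], p, w) (t, q, w')"
    using grl_move_delete_singleton[of p a _ _ "[]" "[]" w'] a by simp
qed

lemma dfa_rules_reach_iff:
  assumes "p \<in> Q" "w \<in> lists S" "\<forall>q\<in>Q. \<forall>a\<in>S. \<delta> q a \<in> Q"
  shows "(grl_move (dfa_rules S Q \<delta>))\<^sup>*\<^sup>* ([], p, w) ([], q, []) \<longleftrightarrow> q = foldl \<delta> p w"
  using assms(1,2)
proof (induction w arbitrary: p)
  case Nil
  then show ?case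
    by (auto elim: converse_rtranclpE simp: grl_move_dfa_rules_iff)
next
  case (Cons a v)
  then have "\<delta> p a \<in> Q" "v \<in> lists S" using assms(3) by auto
  note IH = Cons.IH[OF this]
  have step: "grl_move (dfa_rules S Q \<delta>) ([], p, a # v) c \<longleftrightarrow> c = ([], \<delta> p a, v)" for c
    using grl_move_dfa_rules_iff[OF Cons.prems] by (cases c) auto
  have "(grl_move (dfa_rules S Q \<delta>))\<^sup>*\<^sup>* ([], p, a # v) ([], q, []) \<longleftrightarrow>
      (grl_move (dfa_rules S Q \<delta>))\<^sup>*\<^sup>* ([], \<delta> p a, v) ([], q, [])"
  proof
    assume "(grl_move (dfa_rules S Q \<delta>))\<^sup>*\<^sup>* ([], p, a # v) ([], q, [])"
    then show "(grl_move (dfa_rules S Q \<delta>))\<^sup>*\<^sup>* ([], \<delta> p a, v) ([], q, [])"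
      by (cases rule: converse_rtranclpE) (simp_all add: step)
  next
    assume "(grl_move (dfa_rules S Q \<delta>))\<^sup>*\<^sup>* ([], \<delta> p a, v) ([], q, [])"
    then show "(grl_move (dfa_rules S Q \<delta>))\<^sup>*\<^sup>* ([], p, a # v) ([], q, [])"
      by (rule converse_rtranclp_into_rtranclp[rotated]) (simp add: step)
  qed
  then show ?case using IH by simp
qed

lemma REG_subset_GRLOWJ:
  assumes "finite S"
  shows "REG S \<subseteq> GRLOWJ S"
proof
  fix L assume "L \<in> REG S"
  then obtain Q :: "nat set" and q0 F \<delta> where dfa: "finite Q" "q0 \<in> Q" "F \<subseteq> Q"
    "\<forall>q\<in>Q. \<forall>a\<in>S. \<delta> q a \<in> Q" and L: "L = dfa_lang S q0 F \<delta>"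
    unfolding REG_def by blast
  have "is_grlowjfa S Q q0 F (dfa_rules S Q \<delta>)"
    using dfa assms by (auto simp: is_grlowjfa_def dfa_rules_def)
  moreover have "w \<in> L \<longleftrightarrow> w \<in> grl_lang S q0 F (dfa_rules S Q \<delta>)" for w
  proof (cases "w \<in> lists S")
    case True
    then show ?thesis
      using dfa_rules_reach_iff[OF dfa(2) True dfa(4)] by (auto simp: L dfa_lang_def grl_lang_def)
  qed (simp add: L dfa_lang_def grl_lang_def)
  ultimately show "L \<in> GRLOWJ S" unfolding GRLOWJ_def by blast
qed

section \<open>A non-regular GRLOWJ language\<close>

definition equal_count_lang :: "nat list set" where
  "equal_count_lang = {w \<in> lists {0, 1}. count_list w 0 = count_list w 1}"

definition balance_rules :: "(nat \<times> nat list \<times> nat) set" where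
  "balance_rules = {(0, [0], 1), (1, [1], 0)}"

(* In state 1 one deleted 0 is still waiting for its matching 1. *)
definition imbalance :: "nat list \<Rightarrow> nat \<Rightarrow> int" where
  "imbalance w s = int (count_list w 0) - int (count_list w 1) + int s"

lemma no_sub_balance_rules_iff: "s \<in> {0, 1} \<Longrightarrow> no_sub balance_rules s u \<longleftrightarrow> s \<notin> set u"
  by (subst no_sub_iff_disjoint[where A = "{s}"]) (auto simp: Sigma_p_def balance_rules_def)

lemma balance_rules_delete:
  assumes "s \<in> {0, 1}" "s \<notin> set u"
  shows "grl_move balance_rules (t, s, u @ s # v) (t @ u, 1 - s, v)"
proof (rule grl_move_delete_singleton)
  show "(s, [s], 1 - s) \<in> balance_rules"
    using assms(1) by (auto simp: balance_rules_def)
  show "no_sub balance_rules s u"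
    using assms by (simp add: no_sub_balance_rules_iff)
qed

lemma balance_rules_jump:
  assumes "s \<in> {0, 1}" "s \<notin> set v" "t \<noteq> []"
  shows "grl_move balance_rules (t, s, v) ([], s, t @ v)"
  using assms by (intro grl_move_jump) (auto simp: no_sub_balance_rules_iff)

lemma imbalance_delete: "s \<in> {0, 1} \<Longrightarrow> imbalance (u @ s # v) s = imbalance (u @ v) (1 - s)"
  by (auto simp: imbalance_def)

lemma imbalance_eq_0_without_state_letter:
  assumes "x \<in> lists {0, 1}" "s \<in> {0, 1}" "s \<notin> set x" "imbalance x s = 0"
  shows "s = 0 \<and> x = []"
proof -
  have "count_list x s = 0" using assms(3) by simp
  with assms(2,4) have "s = 0" "count_list x 1 = 0"
    by (auto simp: imbalance_def)
  with assms(1,3) show ?thesis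
    by (cases x) (auto simp: count_list_0_iff)
qed

lemma balance_rules_move_imbalance:
  assumes "grl_move balance_rules (t, s, w) (t', s', w')" "s \<in> {0, 1}"
  shows "s' \<in> {0, 1} \<and> imbalance (t' @ w') s' = imbalance (t @ w) s"
  using assms(1)
proof (cases rule: grl_moveE)
  case (delete u x)
  then show ?thesis by (auto simp: balance_rules_def imbalance_def)
qed (use assms(2) in simp)

lemma balance_rules_reach_imbalance:
  assumes "(grl_move balance_rules)\<^sup>*\<^sup>* ([], 0, w) (t, s, v)"
  shows "s \<in> {0, 1} \<and> imbalance (t @ v) s = imbalance w 0"
  using assms
proof (induction "(t, s, v)" arbitrary: t s v rule: rtranclp_induct)
  case (step c)
  obtain t0 s0 v0 where c: "c = (t0, s0, v0)" by (cases c)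
  with step.hyps(3) have "s0 \<in> {0, 1}" "imbalance (t0 @ v0) s0 = imbalance w 0"
    by simp_all
  with step.hyps(2) show ?case
    unfolding c using balance_rules_move_imbalance by metis
qed simp

lemma balance_rules_accept:
  assumes "t @ v \<in> lists {0, 1}" "s \<in> {0, 1}" "imbalance (t @ v) s = 0"
  shows "(grl_move balance_rules)\<^sup>*\<^sup>* (t, s, v) ([], 0, [])"
  using assms
proof (induction "length (t @ v)" arbitrary: t s v rule: less_induct)
  case less
  have delete_then_accept: "(grl_move balance_rules)\<^sup>*\<^sup>* (t', s, u @ s # v') ([], 0, [])"
    if "s \<notin> set u" "t' @ u @ s # v' = t @ v" for t' u v'
  proof -
    have "length ((t' @ u) @ v') < length (t @ v)" "(t' @ u) @ v' \<in> lists {0, 1}"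
      "imbalance ((t' @ u) @ v') (1 - s) = 0"
      using less.prems imbalance_delete[OF less.prems(2), of "t' @ u" v']
      by (simp_all flip: that(2))
    then have "(grl_move balance_rules)\<^sup>*\<^sup>* (t' @ u, 1 - s, v') ([], 0, [])"
      by (intro less.hyps) auto
    then show ?thesis
      using balance_rules_delete[OF less.prems(2) that(1)] by (rule converse_rtranclp_into_rtranclp[rotated])
  qed
  consider (right) "s \<in> set v" | (left) "s \<notin> set v" "t \<noteq> []" | (empty) "s \<notin> set v" "t = []"
    by blast
  then show ?case
  proof cases
    case right
    then obtain u v' where "v = u @ s # v'" "s \<notin> set u" by (meson split_list_first)
    then show ?thesis using delete_then_accept[of u t v'] by simp
  next
    case left
    have "s \<in> set (t @ v)"
      using imbalance_eq_0_without_state_letter[of "t @ v" s] less.prems left(2) by auto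
    then obtain u v' where "t @ v = u @ s # v'" "s \<notin> set u" by (meson split_list_first)
    then have "(grl_move balance_rules)\<^sup>*\<^sup>* ([], s, t @ v) ([], 0, [])"
      using delete_then_accept[of u "[]" v'] by simp
    then show ?thesis
      using balance_rules_jump[OF less.prems(2) left] by (rule converse_rtranclp_into_rtranclp[rotated])
  next
    case empty
    then show ?thesis
      using imbalance_eq_0_without_state_letter[of v s] less.prems by auto
  qed
qed

lemma equal_count_lang_eq_grl_lang: "equal_count_lang = grl_lang {0, 1} 0 {0} balance_rules"
proof (intro set_eqI iffI)
  fix w assume "w \<in> equal_count_lang"
  then have "w \<in> lists {0, 1}" "imbalance w 0 = 0"
    by (auto simp: equal_count_lang_def imbalance_def)
  then show "w \<in> grl_lang {0, 1} 0 {0} balance_rules"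
    using balance_rules_accept[of "[]" w 0] by (auto simp: grl_lang_def)
next
  fix w assume "w \<in> grl_lang {0, 1} 0 {0} balance_rules"
  then have "w \<in> lists {0, 1}" "(grl_move balance_rules)\<^sup>*\<^sup>* ([], 0, w) ([], 0, [])"
    by (auto simp: grl_lang_def)
  moreover from this(2) have "imbalance w 0 = 0"
    using balance_rules_reach_imbalance by (fastforce simp: imbalance_def)
  ultimately show "w \<in> equal_count_lang"
    by (auto simp: equal_count_lang_def imbalance_def)
qed

lemma equal_count_lang_GRLOWJ: "equal_count_lang \<in> GRLOWJ {0, 1}"
proof -
  have "is_grlowjfa {0, 1} {0, 1 :: nat} 0 {0} balance_rules"
    by (auto simp: is_grlowjfa_def balance_rules_def)
  then show ?thesis
    unfolding GRLOWJ_def using equal_count_lang_eq_grl_lang by blast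
qed

lemma count_list_replicate: "count_list (replicate n x) y = (if x = y then n else 0)"
  by (induction n) auto

lemma foldl_in_states:
  "p \<in> Q \<Longrightarrow> w \<in> lists S \<Longrightarrow> \<forall>q\<in>Q. \<forall>a\<in>S. \<delta> q a \<in> Q \<Longrightarrow> foldl \<delta> p w \<in> Q"
  by (induction w arbitrary: p) auto

lemma dfa_lang_append_same_state:
  assumes "foldl \<delta> q0 u = foldl \<delta> q0 u'" "u \<in> lists S" "u' \<in> lists S"
  shows "u @ v \<in> dfa_lang S q0 F \<delta> \<longleftrightarrow> u' @ v \<in> dfa_lang S q0 F \<delta>"
  using assms by (simp add: dfa_lang_def)

lemma foldl_replicate_collision:
  assumes "finite Q" "q0 \<in> Q" "\<forall>q\<in>Q. \<delta> q c \<in> Q"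
  obtains i j where "i \<noteq> j" "foldl \<delta> q0 (replicate i c) = foldl \<delta> q0 (replicate j c)"
proof -
  let ?f = "\<lambda>i. foldl \<delta> q0 (replicate i c)"
  have "range ?f \<subseteq> Q"
    using foldl_in_states[OF assms(2) _, of _ "{c}"] assms(3) by (auto simp: in_lists_conv_set)
  have "\<not> inj ?f"
  proof
    assume "inj ?f"
    then have "finite (UNIV :: nat set)"
      by (rule inj_on_finite[OF _ \<open>range ?f \<subseteq> Q\<close> assms(1)])
    then show False by simp
  qed
  then show ?thesis
    using that unfolding inj_def by blast
qed

lemma equal_count_lang_not_REG: "equal_count_lang \<notin> REG {0, 1}"
proof
  assume "equal_count_lang \<in> REG {0, 1}"
  then obtain Q :: "nat set" and q0 F \<delta> where dfa: "finite Q" "q0 \<in> Q"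
    "\<forall>q\<in>Q. \<forall>a\<in>{0, 1}. \<delta> q a \<in> Q" and L: "equal_count_lang = dfa_lang {0, 1} q0 F \<delta>"
    unfolding REG_def by blast
  obtain i j where "i \<noteq> j" and same_state:
    "foldl \<delta> q0 (replicate i (0 :: nat)) = foldl \<delta> q0 (replicate j 0)"
    using foldl_replicate_collision[OF dfa(1,2), of \<delta> 0] dfa(3) by auto
  have mem: "replicate m 0 @ replicate n 1 \<in> equal_count_lang \<longleftrightarrow> m = n" for m n
    by (simp add: equal_count_lang_def count_list_replicate in_lists_conv_set set_replicate_conv_if)
  have "replicate i 0 @ replicate i 1 \<in> dfa_lang {0, 1} q0 F \<delta> \<longleftrightarrow>
      replicate j 0 @ replicate i 1 \<in> dfa_lang {0, 1} q0 F \<delta>"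
    by (rule dfa_lang_append_same_state) (use same_state in \<open>simp_all add: in_lists_conv_set\<close>)
  then show False
    using mem[of i i] mem[of j i] \<open>i \<noteq> j\<close> by (simp add: L)
qed

theorem proposition3:
  shows "(\<forall>S :: 'a set. finite S \<longrightarrow> REG S \<subseteq> GRLOWJ S) \<and>
         (\<exists>(S :: nat set) L. finite S \<and> L \<in> GRLOWJ S \<and> L \<notin> REG S)"
proof (intro conjI allI impI)
  show "REG S \<subseteq> GRLOWJ S" if "finite S" for S :: "'a set"
    using that by (rule REG_subset_GRLOWJ)
  show "\<exists>(S :: nat set) L. finite S \<and> L \<in> GRLOWJ S \<and> L \<notin> REG S"
    using equal_count_lang_GRLOWJ equal_count_lang_not_REG by (intro exI[of _ "{0, 1}"]) auto
qed

end
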